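(* Let $\mathcal G=(V_{\min},V_{\max},E,w,\lambda)$ be a discounted payoff game and $\varepsilon>0$. Let $\mathcal G'=(V_{\min},V_{\max},E,w',\lambda)$ be obtained from $\mathcal G$ by adding to every edge weight a value drawn independently and uniformly at random from $(-\varepsilon,\varepsilon)$. Then $\mathcal G'$ is almost surely sharp.
   Context: A discounted payoff game is a tuple $\mathcal G=(V_{\min},V_{\max},E,w,\lambda)$ with $V=V_{\min}\cup V_{\max}$ finite (disjoint union of Min and Max vertices), $E\subseteq V\times V$ with every vertex having an outgoing edge, $w:E\to\mathbb R$, $\lambda:E\to[0,1)$. $H$ is the system of inequations over $x\in\mathbb R^V$ containing, for each edge $e=(v,v')$, $x(v)\ge w_e+\lambda_e x(v')$ if $v\in V_{\max}$ and $x(v)\le w_e+\lambda_e x(v')$ if $v\in V_{\min}$. A basis of $H$ is a set of $|V|$ inequations of $H$ whose equality versions have a unique common solution; if that solution satisfies $H$ it is the basis valuation. The game is sharp if every basis valuation satisfies exactly $|V|$ inequations of $H$ with equality (equivalently, distinct bases have distinct basis valuations). *)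

theory Defs
  imports "HOL-Probability.Probability"
begin

text \<open>Vertices form a finite type 'v (so V = UNIV); a valuation is x :: 'v => real.
  Edges are pairs (v, v'); weights and discounts are functions on edges.\<close>

definition dpg :: "'v set \<Rightarrow> 'v set \<Rightarrow> ('v \<times> 'v) set \<Rightarrow> ('v \<times> 'v \<Rightarrow> real) \<Rightarrow> bool" where
  "dpg Vmin Vmax E lam \<longleftrightarrow>
     Vmin \<inter> Vmax = {} \<and> Vmin \<union> Vmax = UNIV \<and>
     (\<forall>v. \<exists>v'. (v, v') \<in> E) \<and>
     (\<forall>e\<in>E. 0 \<le> lam e \<and> lam e < 1)"

definition ineq_holds :: "'v set \<Rightarrow> 'v set \<Rightarrow> ('v \<times> 'v \<Rightarrow> real) \<Rightarrow> ('v \<times> 'v \<Rightarrow> real)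
    \<Rightarrow> 'v \<times> 'v \<Rightarrow> ('v \<Rightarrow> real) \<Rightarrow> bool" where
  "ineq_holds Vmin Vmax w lam e x \<longleftrightarrow>
     (fst e \<in> Vmax \<longrightarrow> x (fst e) \<ge> w e + lam e * x (snd e)) \<and>
     (fst e \<in> Vmin \<longrightarrow> x (fst e) \<le> w e + lam e * x (snd e))"

definition tight :: "('v \<times> 'v \<Rightarrow> real) \<Rightarrow> ('v \<times> 'v \<Rightarrow> real) \<Rightarrow> 'v \<times> 'v \<Rightarrow> ('v \<Rightarrow> real) \<Rightarrow> bool" where
  "tight w lam e x \<longleftrightarrow> x (fst e) = w e + lam e * x (snd e)"

definition is_basis :: "('v::finite \<times> 'v) set \<Rightarrow> ('v \<times> 'v \<Rightarrow> real) \<Rightarrow> ('v \<times> 'v \<Rightarrow> real)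
    \<Rightarrow> ('v \<times> 'v) set \<Rightarrow> bool" where
  "is_basis E w lam B \<longleftrightarrow> B \<subseteq> E \<and> card B = CARD('v) \<and> (\<exists>!x. \<forall>e\<in>B. tight w lam e x)"

definition basis_valuation :: "'v set \<Rightarrow> 'v set \<Rightarrow> ('v::finite \<times> 'v) set \<Rightarrow> ('v \<times> 'v \<Rightarrow> real)
    \<Rightarrow> ('v \<times> 'v \<Rightarrow> real) \<Rightarrow> ('v \<times> 'v) set \<Rightarrow> ('v \<Rightarrow> real) \<Rightarrow> bool" where
  "basis_valuation Vmin Vmax E w lam B x \<longleftrightarrow>
     is_basis E w lam B \<and> (\<forall>e\<in>B. tight w lam e x) \<and> (\<forall>e\<in>E. ineq_holds Vmin Vmax w lam e x)"

definition sharp :: "'v set \<Rightarrow> 'v set \<Rightarrow> ('v::finite \<times> 'v) set \<Rightarrow> ('v \<times> 'v \<Rightarrow> real)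
    \<Rightarrow> ('v \<times> 'v \<Rightarrow> real) \<Rightarrow> bool" where
  "sharp Vmin Vmax E w lam \<longleftrightarrow>
     (\<forall>B x. basis_valuation Vmin Vmax E w lam B x \<longrightarrow>
        card {e\<in>E. tight w lam e x} = CARD('v))"

end

theory Submission
  imports Defs "HOL-Library.Function_Algebras"
begin

text \<open>A basis fixes its valuation as a linear function of the weights of the basis edges
  alone. A further edge e outside the basis is tight at that valuation only if the perturbation
  of e equals a function of the perturbations of the other edges, and under a product of
  atomless distributions this happens with probability zero. As there are only finitely many
  pairs of a basis and an edge outside it, almost surely no basis valuation makes more than
  the basis edges tight. Neither the bounds on the discounts nor the partition of the vertices
  enter the argument.\<close>

lemma AE_PiM_component_neq:
  fixes M :: "'i \<Rightarrow> real measure" and h :: "('i \<Rightarrow> real) \<Rightarrow> real"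
  assumes "product_sigma_finite M" and "finite I" and "i \<in> I"
    and sets_Mi: "sets (M i) = sets borel" and atomless: "\<And>c. emeasure (M i) {c} = 0"
    and h_measurable: "h \<in> borel_measurable (PiM I M)"
    and h_indep: "\<And>d t. h (d(i := t)) = h d"
  shows "AE d in PiM I M. d i \<noteq> h d"
proof -
  interpret product_sigma_finite M by fact
  let ?N = "{d \<in> space (PiM I M). d i = h d}"
  let ?J = "I - {i}"
  have I_eq: "I = insert i ?J" using \<open>i \<in> I\<close> by auto
  have "(\<lambda>d. d i) \<in> borel_measurable (PiM I M)"
    using measurable_component_singleton[OF \<open>i \<in> I\<close>, of M] sets_Mi
    by (metis measurable_cong_sets)
  then have N_sets: "?N \<in> sets (PiM I M)"
    using h_measurable by (rule measurable_equality_set)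
  have "emeasure (PiM I M) ?N = (\<integral>\<^sup>+ d. indicator ?N d \<partial>PiM (insert i ?J) M)"
    using N_sets I_eq by simp
  also have "\<dots> = (\<integral>\<^sup>+ x. (\<integral>\<^sup>+ y. indicator ?N (x(i := y)) \<partial>M i) \<partial>PiM ?J M)"
    using N_sets I_eq \<open>finite I\<close> by (intro product_nn_integral_insert) auto
  also have "\<dots> = (\<integral>\<^sup>+ x. 0 \<partial>PiM ?J M)"
  proof (rule nn_integral_cong)
    fix x
    have "(\<integral>\<^sup>+ y. indicator ?N (x(i := y)) \<partial>M i) \<le> (\<integral>\<^sup>+ y. indicator {h x} y \<partial>M i)"
      by (intro nn_integral_mono) (auto simp: indicator_def h_indep)
    also have "\<dots> = emeasure (M i) {h x}"
      using sets_Mi by simp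
    finally show "(\<integral>\<^sup>+ y. indicator ?N (x(i := y)) \<partial>M i) = 0"
      using atomless by simp
  qed
  finally have "?N \<in> null_sets (PiM I M)"
    using N_sets by (simp add: null_sets_def)
  then show ?thesis
    by (rule AE_I') auto
qed

interpretation real_fun: vector_space_pair
  "\<lambda>c (f :: 'a \<Rightarrow> real) x. c * f x" "\<lambda>c (g :: 'b \<Rightarrow> real) y. c * g y"
  by unfold_locales (auto simp: fun_eq_iff algebra_simps)

lemma sum_fun_apply: "(\<Sum>a\<in>A. f a) x = (\<Sum>a\<in>A. f a x)"
  by (induction A rule: infinite_finite_induct) auto

lemma tight_solution_linear_in_weights:
  fixes B :: "('v \<times> 'v) set" and w lam :: "'v \<times> 'v \<Rightarrow> real"
  assumes "finite B" and unique: "\<exists>!x. \<forall>b\<in>B. tight w lam b x"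
  obtains c :: "'v \<times> 'v \<Rightarrow> 'v \<Rightarrow> real"
  where "\<And>w' x. \<forall>b\<in>B. tight w' lam b x \<Longrightarrow> x = (\<lambda>v. \<Sum>b\<in>B. w' b * c b v)"
proof -
  define L where "L x = (\<lambda>b. if b \<in> B then x (fst b) - lam b * x (snd b) else 0)"
    for x :: "'v \<Rightarrow> real"
  have L_linear: "Vector_Spaces.linear (\<lambda>c f x. c * f x) (\<lambda>c g y. c * g y) L"
    unfolding module_hom_iff_linear[symmetric] module_hom_iff
    using real_fun.vs1.vector_space_axioms[where 'a = 'v]
      real_fun.vs1.vector_space_axioms[where 'a = "'v \<times> 'v"]
    by (auto simp: L_def fun_eq_iff algebra_simps module_iff_vector_space)
  have "inj L"
    unfolding real_fun.linear_inj_iff_eq_0[OF L_linear]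
  proof (intro allI impI)
    fix z assume "L z = 0"
    obtain x where x: "\<forall>b\<in>B. tight w lam b x" using unique by blast
    have "\<forall>b\<in>B. tight w lam b (x + z)"
    proof
      fix b assume "b \<in> B"
      with fun_cong[OF \<open>L z = 0\<close>, of b] have "z (fst b) = lam b * z (snd b)"
        by (simp add: L_def)
      with x \<open>b \<in> B\<close> show "tight w lam b (x + z)"
        by (auto simp: tight_def algebra_simps)
    qed
    with x unique have "x + z = x" by blast
    then show "z = 0" by simp
  qed
  then obtain g where g_linear: "Vector_Spaces.linear (\<lambda>c g y. c * g y) (\<lambda>c f x. c * f x) g"
    and g_L: "g \<circ> L = id"
    using real_fun.linear_injective_left_inverse[OF L_linear] by blast
  define unit where "unit b = (\<lambda>b'. if b' = b then 1 else 0 :: real)" for b :: "'v \<times> 'v"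
  show thesis
  proof
    fix w' x assume tight_B: "\<forall>b\<in>B. tight w' lam b x"
    have "L x = (\<Sum>b\<in>B. (\<lambda>b'. w' b * unit b b'))"
      using tight_B \<open>finite B\<close>
      by (auto simp: L_def unit_def tight_def fun_eq_iff sum_fun_apply if_distrib sum.delta
          cong: if_cong)
    then have "x = g (\<Sum>b\<in>B. (\<lambda>b'. w' b * unit b b'))"
      using g_L by (metis comp_apply id_apply)
    also have "\<dots> = (\<lambda>v. \<Sum>b\<in>B. w' b * g (unit b) v)"
      by (simp add: real_fun.linear_sum[OF g_linear] real_fun.linear_scale[OF g_linear]
          sum_fun_apply fun_eq_iff)
    finally show "x = (\<lambda>v. \<Sum>b\<in>B. w' b * g (unit b) v)" .
  qed
qed

lemma AE_no_further_tight_edge: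
  fixes M :: "'v \<times> 'v \<Rightarrow> real measure" and w lam :: "'v \<times> 'v \<Rightarrow> real"
  assumes "product_sigma_finite M" and "finite I" and "B \<subseteq> I" and "e \<in> I - B"
    and sets_M: "\<And>j. sets (M j) = sets borel" and atomless: "\<And>c. emeasure (M e) {c} = 0"
  shows "AE \<delta> in PiM I M. \<forall>x.
           (\<exists>!y. \<forall>b\<in>B. tight (\<lambda>b. w b + \<delta> b) lam b y) \<and> (\<forall>b\<in>B. tight (\<lambda>b. w b + \<delta> b) lam b x)
           \<longrightarrow> \<not> tight (\<lambda>b. w b + \<delta> b) lam e x"
proof (cases "\<exists>w'. \<exists>!y. \<forall>b\<in>B. tight w' lam b y")
  case False
  then show ?thesis by (intro AE_I2) blast
next
  case True
  have "finite B" using \<open>finite I\<close> \<open>B \<subseteq> I\<close> by (rule finite_subset[rotated])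
  moreover from True obtain w0 where "\<exists>!y. \<forall>b\<in>B. tight w0 lam b y" by blast
  ultimately obtain c :: "'v \<times> 'v \<Rightarrow> 'v \<Rightarrow> real"
    where solution: "\<And>w' x. \<forall>b\<in>B. tight w' lam b x \<Longrightarrow> x = (\<lambda>v. \<Sum>b\<in>B. w' b * c b v)"
    by (rule tight_solution_linear_in_weights) blast
  \<comment> \<open>the value of the perturbation of e that makes e tight at the basis valuation\<close>
  define h where "h \<delta> = (\<Sum>b\<in>B. (w b + \<delta> b) * c b (fst e))
      - lam e * (\<Sum>b\<in>B. (w b + \<delta> b) * c b (snd e)) - w e" for \<delta> :: "'v \<times> 'v \<Rightarrow> real"
  have component: "(\<lambda>\<delta>. \<delta> j) \<in> borel_measurable (PiM I M)" if "j \<in> I" for j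
    using measurable_component_singleton[OF that, of M] sets_M
    by (metis measurable_cong_sets)
  have "h \<in> borel_measurable (PiM I M)"
    unfolding h_def using \<open>B \<subseteq> I\<close> by (auto intro!: borel_measurable_sum borel_measurable_times
        borel_measurable_add borel_measurable_diff component)
  moreover have "h (\<delta>(e := t)) = h \<delta>" for \<delta> t
  proof -
    have "\<forall>b\<in>B. (\<delta>(e := t)) b = \<delta> b" using \<open>e \<in> I - B\<close> by auto
    then show ?thesis by (simp add: h_def cong: sum.cong_simp)
  qed
  ultimately have "AE \<delta> in PiM I M. \<delta> e \<noteq> h \<delta>"
    using assms by (intro AE_PiM_component_neq) auto
  then show ?thesis
  proof (rule eventually_mono, intro allI impI notI)
    fix \<delta> x
    assume "\<delta> e \<noteq> h \<delta>" and "tight (\<lambda>b. w b + \<delta> b) lam e x"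
      and "(\<exists>!y. \<forall>b\<in>B. tight (\<lambda>b. w b + \<delta> b) lam b y) \<and> (\<forall>b\<in>B. tight (\<lambda>b. w b + \<delta> b) lam b x)"
    then show False
      using solution[of "\<lambda>b. w b + \<delta> b" x] by (auto simp: tight_def h_def)
  qed
qed

lemma sharpI:
  fixes E :: "('v::finite \<times> 'v) set"
  assumes "\<And>B x e. is_basis E w lam B \<Longrightarrow> \<forall>b\<in>B. tight w lam b x \<Longrightarrow> e \<in> E - B
             \<Longrightarrow> \<not> tight w lam e x"
  shows "sharp Vmin Vmax E w lam"
  unfolding sharp_def basis_valuation_def
proof (intro allI impI, elim conjE)
  fix B x assume B: "is_basis E w lam B" and tight_B: "\<forall>b\<in>B. tight w lam b x"
  have "{e \<in> E. tight w lam e x} = B"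
  proof
    show "{e \<in> E. tight w lam e x} \<subseteq> B"
      using assms[OF B tight_B] by blast
    show "B \<subseteq> {e \<in> E. tight w lam e x}"
      using B tight_B unfolding is_basis_def by blast
  qed
  with B show "card {e \<in> E. tight w lam e x} = CARD('v)"
    by (simp add: is_basis_def)
qed

theorem lemma4p6:
  fixes Vmin Vmax :: "'v::finite set" and E :: "('v \<times> 'v) set"
    and w lam :: "'v \<times> 'v \<Rightarrow> real" and \<epsilon> :: real
  assumes "dpg Vmin Vmax E lam" and "\<epsilon> > 0"
  shows "AE \<delta> in PiM E (\<lambda>_. uniform_measure lborel {-\<epsilon><..<\<epsilon>}).
           sharp Vmin Vmax E (\<lambda>e. w e + \<delta> e) lam"
proof -
  let ?M = "\<lambda>_ :: 'v \<times> 'v. uniform_measure lborel {-\<epsilon><..<\<epsilon>}"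
  have "prob_space (?M i)" for i :: "'v \<times> 'v"
    using \<open>\<epsilon> > 0\<close> by (intro prob_space_uniform_measure) auto
  then have "product_sigma_finite ?M"
    unfolding product_sigma_finite_def using prob_space_imp_sigma_finite by blast
  moreover have "emeasure (?M i) {c} = 0" for i :: "'v \<times> 'v" and c
    by (simp add: Int_insert_right)
  ultimately have "AE \<delta> in PiM E ?M. \<forall>B \<in> Pow E. \<forall>e \<in> E - B. \<forall>x.
           (\<exists>!y. \<forall>b\<in>B. tight (\<lambda>b. w b + \<delta> b) lam b y) \<and> (\<forall>b\<in>B. tight (\<lambda>b. w b + \<delta> b) lam b x)
           \<longrightarrow> \<not> tight (\<lambda>b. w b + \<delta> b) lam e x"
    (is "AE \<delta> in _. \<forall>B \<in> _. \<forall>e \<in> _. ?no_further_tight \<delta> B e")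
    by (intro AE_finite_allI) (auto intro!: AE_no_further_tight_edge)
  then show ?thesis
  proof (rule eventually_mono, intro sharpI)
    fix \<delta> B x e
    assume no_further_tight: "\<forall>B \<in> Pow E. \<forall>e \<in> E - B. ?no_further_tight \<delta> B e"
      and "is_basis E (\<lambda>b. w b + \<delta> b) lam B" and "\<forall>b\<in>B. tight (\<lambda>b. w b + \<delta> b) lam b x"
      and "e \<in> E - B"
    with no_further_tight[rule_format, of B e x] show "\<not> tight (\<lambda>b. w b + \<delta> b) lam e x"
      unfolding is_basis_def by blast
  qed
qed

end
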